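(* Let $U$ be a nonempty finite set, $R\subseteq U\times U$ serial and transitive, and $cl$ the closure operator of $M(Reg(U,R))$. Let $n$ be an integer with $1\le n\le h(U)$, and let $X,Y\in Reg(U,R)$ with $h(X)=n$ and $h(Y)=n-1$. Then for every $Z\subseteq U$ with $Y\subsetneq Z\subsetneq X$, $cl(Z)=X$.
   Context: $R_s(x)=\{y\in U\mid xRy\}$; $\underline{R}(X)=\{x\mid R_s(x)\subseteq X\}$, $\overline{R}(X)=\{x\mid R_s(x)\cap X\neq\emptyset\}$; $X$ is regular if $X=\underline{R}(\overline{R}(X))$, and $Reg(U,R)$ is the lattice of regular sets under inclusion, with least element $\emptyset$. $h(A)$ is the length of a maximal chain in $[\emptyset,A]$. $M(Reg(U,R))$ is the matroid on $U$ with independent sets $\{X\subseteq U\mid h(Y)\ge|X\cap Y|\ \forall Y\in Reg(U,R)\}$, rank function $r(X)=\max\{|I|\mid I\subseteq X \text{ independent}\}$, and closure operator $cl(X)=\{u\in U\mid r(X\cup\{u\})=r(X)\}$. *)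

theory Defs
  imports Main
begin

definition Rs :: "'a set \<Rightarrow> ('a \<times> 'a) set \<Rightarrow> 'a \<Rightarrow> 'a set" where
  "Rs U R x = {y \<in> U. (x, y) \<in> R}"

definition lower_appr :: "'a set \<Rightarrow> ('a \<times> 'a) set \<Rightarrow> 'a set \<Rightarrow> 'a set" where
  "lower_appr U R X = {x \<in> U. Rs U R x \<subseteq> X}"

definition upper_appr :: "'a set \<Rightarrow> ('a \<times> 'a) set \<Rightarrow> 'a set \<Rightarrow> 'a set" where
  "upper_appr U R X = {x \<in> U. Rs U R x \<inter> X \<noteq> {}}"

definition regular :: "'a set \<Rightarrow> ('a \<times> 'a) set \<Rightarrow> 'a set \<Rightarrow> bool" where
  "regular U R X \<longleftrightarrow> X = lower_appr U R (upper_appr U R X)"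

definition Reg :: "'a set \<Rightarrow> ('a \<times> 'a) set \<Rightarrow> 'a set set" where
  "Reg U R = {X. regular U R X}"

definition serial :: "'a set \<Rightarrow> ('a \<times> 'a) set \<Rightarrow> bool" where
  "serial U R \<longleftrightarrow> (\<forall>x\<in>U. \<exists>y\<in>U. (x, y) \<in> R)"

definition h :: "'a set \<Rightarrow> ('a \<times> 'a) set \<Rightarrow> 'a set \<Rightarrow> nat" where
  "h U R A = Max {card C - 1 | C. finite C \<and> C \<noteq> {} \<and>
      C \<subseteq> {B \<in> Reg U R. B \<subseteq> A} \<and> chain\<^sub>\<subseteq> C}"

definition indep :: "'a set \<Rightarrow> ('a \<times> 'a) set \<Rightarrow> 'a set \<Rightarrow> bool" where
  "indep U R X \<longleftrightarrow> X \<subseteq> U \<and> (\<forall>Y\<in>Reg U R. card (X \<inter> Y) \<le> h U R Y)"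

definition rank :: "'a set \<Rightarrow> ('a \<times> 'a) set \<Rightarrow> 'a set \<Rightarrow> nat" where
  "rank U R X = Max {card I | I. I \<subseteq> X \<and> indep U R I}"

definition cl :: "'a set \<Rightarrow> ('a \<times> 'a) set \<Rightarrow> 'a set \<Rightarrow> 'a set" where
  "cl U R X = {u \<in> U. rank U R (X \<union> {u}) = rank U R X}"

end

theory Submission
  imports Defs
begin

(* Throughout, U is finite and R is a serial transitive relation on U.
   (1) Reg U R is closed under intersection: every point has an R-successor that is
       "terminal" (R-equivalent to all of its successors), and regular sets are closed
       under passing to terminal successors.
   (2) If C is a finite chain of regular sets and b picks in each nonempty member B a
       point not lying in any strictly smaller member (a "transversal" of C), then the
       chosen points form an independent set of size card (C - {{}}): for regular T the
       sets T \<inter> B whose representative lies in T, together with {}, form a chain of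
       regular sets below T, so there are at most h T of them.
   (3) Consequently rank W \<ge> card (C - {{}}) whenever the representatives lie in W.
       If moreover equality holds, then cl W \<subseteq> \<Union>C: a point outside \<Union>C could be added
       to the chain with top element U, raising the rank.  Conversely, W \<subseteq> X with X
       regular and rank W = h X gives X \<subseteq> cl W.
   For proposition9 we take a longest chain below Y, put X on top of it with a
   representative from Z - Y; this yields rank Z = n = h X and \<Union>C = X. *)

section \<open>Regular sets\<close>

lemma reg_subset: "X \<in> Reg U R \<Longrightarrow> X \<subseteq> U"
  unfolding Reg_def regular_def lower_appr_def by blast

lemma reg_empty: "serial U R \<Longrightarrow> {} \<in> Reg U R"
  unfolding Reg_def regular_def lower_appr_def upper_appr_def serial_def Rs_def by auto

lemma reg_carrier: "serial U R \<Longrightarrow> U \<in> Reg U R"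
  unfolding Reg_def regular_def lower_appr_def upper_appr_def serial_def Rs_def by auto

definition terminal :: "('a \<times> 'a) set \<Rightarrow> 'a \<Rightarrow> bool" where
  "terminal R w \<longleftrightarrow> (\<forall>v. (w, v) \<in> R \<longrightarrow> (v, w) \<in> R)"

text \<open>Every point has a terminal successor: take a successor with the fewest successors.\<close>
lemma terminal_successor_exists:
  assumes "finite U" "R \<subseteq> U \<times> U" "serial U R" "trans R" "y \<in> U"
  shows "\<exists>v. (y, v) \<in> R \<and> terminal R v"
proof -
  let ?S = "Rs U R y" and ?f = "\<lambda>w. card (Rs U R w)"
  have fin_Rs: "finite (Rs U R w)" for w using assms(1) unfolding Rs_def by auto
  have "?S \<noteq> {}" using assms(3,5) unfolding serial_def Rs_def by auto
  then obtain w where w: "w \<in> ?S" and w_min: "\<And>w'. w' \<in> ?S \<Longrightarrow> ?f w \<le> ?f w'"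
    using ex_min_if_finite[of "?f ` ?S"] fin_Rs[of y] by (auto simp: not_less)
  have Rs_eq: "Rs U R v = Rs U R w" if "v \<in> Rs U R w" for v
  proof -
    have "Rs U R v \<subseteq> Rs U R w" using that assms(4) unfolding Rs_def trans_def by blast
    moreover have "v \<in> ?S" using that w assms(4) unfolding Rs_def trans_def by blast
    ultimately show ?thesis using w_min[of v] card_subset_eq[OF fin_Rs] by (meson card_mono fin_Rs le_antisym)
  qed
  have "w \<in> U" using w unfolding Rs_def by auto
  then obtain v where v: "v \<in> U" "(w, v) \<in> R" using assms(3) unfolding serial_def by auto
  have vw: "v \<in> Rs U R w" using v unfolding Rs_def by auto
  have "(y, v) \<in> R" using w v(2) assms(4) unfolding Rs_def trans_def by blast
  moreover have "terminal R v"
    unfolding terminal_def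
  proof (intro allI impI)
    fix v' assume "(v, v') \<in> R"
    then have "v' \<in> Rs U R w" using Rs_eq[OF vw] assms(2) unfolding Rs_def by auto
    then have "Rs U R v' = Rs U R v" using Rs_eq vw by simp
    moreover have "v \<in> Rs U R v" using Rs_eq[OF vw] vw by simp
    ultimately show "(v', v) \<in> R" unfolding Rs_def by auto
  qed
  ultimately show ?thesis by blast
qed

lemma reg_terminal_successor:
  assumes "R \<subseteq> U \<times> U" "trans R" "A \<in> Reg U R"
    and "x \<in> A" "(x, w) \<in> R" "terminal R w"
  shows "w \<in> A"
proof -
  have A: "A = lower_appr U R (upper_appr U R A)" using assms(3) unfolding Reg_def regular_def by auto
  have wU: "w \<in> U" using assms(1,5) by auto
  then have "w \<in> upper_appr U R A" using assms(4,5) A unfolding lower_appr_def Rs_def by auto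
  then obtain a where a: "(w, a) \<in> R" "a \<in> A" unfolding upper_appr_def Rs_def by auto
  have "Rs U R w \<subseteq> upper_appr U R A"
  proof
    fix t assume t: "t \<in> Rs U R w"
    then have "(t, a) \<in> R" using a(1) assms(2,6) unfolding Rs_def terminal_def trans_def by blast
    then show "t \<in> upper_appr U R A" using a(2) t assms(1) unfolding upper_appr_def Rs_def by auto
  qed
  then show ?thesis using wU A unfolding lower_appr_def by blast
qed

lemma reg_Int:
  assumes "finite U" "R \<subseteq> U \<times> U" "serial U R" "trans R"
    and A: "A \<in> Reg U R" and B: "B \<in> Reg U R"
  shows "A \<inter> B \<in> Reg U R"
proof -
  have "A \<inter> B \<subseteq> lower_appr U R (upper_appr U R (A \<inter> B))"
  proof
    fix x assume x: "x \<in> A \<inter> B"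
    have "Rs U R x \<subseteq> upper_appr U R (A \<inter> B)"
    proof
      fix y assume y: "y \<in> Rs U R x"
      then have yU: "y \<in> U" and xy: "(x, y) \<in> R" unfolding Rs_def by auto
      obtain w where w: "(y, w) \<in> R" "terminal R w"
        using terminal_successor_exists[OF assms(1-4) yU] by blast
      have xw: "(x, w) \<in> R" using xy w(1) assms(4) unfolding trans_def by blast
      have "w \<in> A \<inter> B"
        using x reg_terminal_successor[OF assms(2,4) _ _ xw w(2)] A B by blast
      then show "y \<in> upper_appr U R (A \<inter> B)"
        using yU w(1) assms(2) unfolding upper_appr_def Rs_def by auto
    qed
    then show "x \<in> lower_appr U R (upper_appr U R (A \<inter> B))"
      using x reg_subset[OF A] unfolding lower_appr_def by auto
  qed
  moreover have "lower_appr U R (upper_appr U R (A \<inter> B)) \<subseteq> A \<inter> B"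
    using A B unfolding Reg_def regular_def lower_appr_def upper_appr_def by blast
  ultimately show ?thesis unfolding Reg_def regular_def by auto
qed

lemma h_values_finite:
  assumes "finite U"
  shows "finite {card C - 1 | C. finite C \<and> C \<noteq> {} \<and> C \<subseteq> {B \<in> Reg U R. B \<subseteq> A} \<and> chain\<^sub>\<subseteq> C}"
proof -
  have "{card C - 1 | C. finite C \<and> C \<noteq> {} \<and> C \<subseteq> {B \<in> Reg U R. B \<subseteq> A} \<and> chain\<^sub>\<subseteq> C}
      \<subseteq> (\<lambda>C. card C - 1) ` Pow (Pow U)"
    using reg_subset by blast
  then show ?thesis using assms by (meson finite_Pow_iff finite_imageI finite_subset)
qed

lemma h_ge:
  assumes "finite U" "finite C" "C \<noteq> {}" "C \<subseteq> {B \<in> Reg U R. B \<subseteq> A}" "chain\<^sub>\<subseteq> C"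
  shows "card C - 1 \<le> h U R A"
  unfolding h_def using assms h_values_finite[OF assms(1), of R A]
  by (intro Max_ge) auto

lemma h_attained:
  assumes "finite U" "serial U R"
  shows "\<exists>C. finite C \<and> C \<noteq> {} \<and> C \<subseteq> {B \<in> Reg U R. B \<subseteq> A} \<and> chain\<^sub>\<subseteq> C \<and> card C - 1 = h U R A"
proof -
  let ?M = "{card C - 1 | C. finite C \<and> C \<noteq> {} \<and> C \<subseteq> {B \<in> Reg U R. B \<subseteq> A} \<and> chain\<^sub>\<subseteq> C}"
  have "card {{}} - 1 \<in> ?M"
    using reg_empty[OF assms(2)] by (intro CollectI exI[of _ "{{}}"]) (simp add: chain_subset_def)
  then have "Max ?M \<in> ?M" using h_values_finite[OF assms(1), of R A] by (intro Max_in) auto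
  then show ?thesis unfolding h_def by auto
qed

lemma rank_values_finite:
  assumes "finite U"
  shows "finite {card I | I. I \<subseteq> W \<and> indep U R I}"
proof -
  have "{card I | I. I \<subseteq> W \<and> indep U R I} \<subseteq> {..card U}"
    using assms unfolding indep_def by (auto intro: card_mono)
  then show ?thesis by (rule finite_subset) auto
qed

lemma rank_ge:
  assumes "finite U" "I \<subseteq> W" "indep U R I"
  shows "card I \<le> rank U R W"
  unfolding rank_def using assms rank_values_finite[OF assms(1)] by (intro Max_ge) auto

lemma rank_mono:
  assumes "finite U" "W \<subseteq> W'"
  shows "rank U R W \<le> rank U R W'"
proof -
  have "indep U R {}" unfolding indep_def by auto
  then show ?thesis
    unfolding rank_def using assms rank_values_finite[OF assms(1), of W' R]
    by (intro Max_mono) auto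
qed

lemma rank_le_h:
  assumes "finite U" "X \<in> Reg U R" "W \<subseteq> X"
  shows "rank U R W \<le> h U R X"
proof -
  have "indep U R {}" unfolding indep_def by auto
  moreover have "card I \<le> h U R X" if "I \<subseteq> W" "indep U R I" for I
    using that assms(2,3) Int_absorb2[of I X] unfolding indep_def by (metis order_trans)
  ultimately show ?thesis
    unfolding rank_def using rank_values_finite[OF assms(1), of W R] by (subst Max_le_iff) auto
qed

section \<open>Transversals of chains\<close>

definition transversal :: "'a set set \<Rightarrow> ('a set \<Rightarrow> 'a) \<Rightarrow> bool" where
  "transversal C b \<longleftrightarrow> (\<forall>B\<in>C - {{}}. b B \<in> B \<and> (\<forall>B'\<in>C. B' \<subset> B \<longrightarrow> b B \<notin> B'))"

lemma transversal_exists: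
  assumes "finite C" "chain\<^sub>\<subseteq> C"
  shows "\<exists>b. transversal C b"
proof -
  have "\<exists>x. x \<in> B \<and> (\<forall>B'\<in>C. B' \<subset> B \<longrightarrow> x \<notin> B')" if B: "B \<in> C - {{}}" for B
  proof -
    let ?S = "{B'\<in>C. B' \<subset> B}"
    have "\<Union>?S \<subset> B"
    proof (cases "?S = {}")
      case True
      then show ?thesis using B by auto
    next
      case False
      have "subset.chain UNIV ?S"
        using assms(2) unfolding chain_subset_alt_def subset.chain_def by auto
      then have "\<Union>?S \<in> ?S" using False assms(1) by (intro Union_in_chain) auto
      then show ?thesis by simp
    qed
    then show ?thesis by blast
  qed
  then show ?thesis unfolding transversal_def by metis
qed

lemma transversal_insert_top:
  assumes "transversal C b" "\<forall>B\<in>C. B \<subset> V" "v \<in> V" "v \<notin> \<Union>C"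
  shows "transversal (insert V C) (b(V := v))"
  using assms unfolding transversal_def by (auto simp: less_le)

lemma chain_insert_top: "chain\<^sub>\<subseteq> C \<Longrightarrow> \<forall>B\<in>C. B \<subset> V \<Longrightarrow> chain\<^sub>\<subseteq> (insert V C)"
  unfolding chain_subset_def by blast

lemma insert_top_image:
  assumes "V \<noteq> {}" "V \<notin> C"
  shows "(b(V := v)) ` (insert V C - {{}}) = insert v (b ` (C - {{}}))"
  using assms by auto

lemma chain_inj_onI:
  assumes "chain\<^sub>\<subseteq> D" "\<And>B1 B2. B1 \<in> D \<Longrightarrow> B2 \<in> D \<Longrightarrow> B1 \<subset> B2 \<Longrightarrow> f B1 \<noteq> f B2"
  shows "inj_on f D"
proof (rule inj_onI)
  fix B1 B2 assume "B1 \<in> D" "B2 \<in> D" "f B1 = f B2"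
  then show "B1 = B2" using assms unfolding chain_subset_def by (metis psubsetI)
qed

lemma transversal_indep:
  assumes "finite U" "R \<subseteq> U \<times> U" "serial U R" "trans R"
    and C: "C \<subseteq> Reg U R" "finite C" "chain\<^sub>\<subseteq> C" and b: "transversal C b"
  shows "indep U R (b ` (C - {{}}))" and "card (b ` (C - {{}})) = card (C - {{}})"
proof -
  let ?C = "C - {{}}"
  have rep: "b B \<in> B" if "B \<in> ?C" for B
    using b that unfolding transversal_def by blast
  have sep: "b B2 \<notin> B1" if "B1 \<in> ?C" "B2 \<in> ?C" "B1 \<subset> B2" for B1 B2
    using b that unfolding transversal_def by blast
  have chain_sub: "chain\<^sub>\<subseteq> D" if "D \<subseteq> C" for D
    using C(3) that unfolding chain_subset_def by blast
  have "inj_on b ?C"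
  proof (rule chain_inj_onI[OF chain_sub])
    show "b B1 \<noteq> b B2" if "B1 \<in> ?C" "B2 \<in> ?C" "B1 \<subset> B2" for B1 B2
      using rep[OF that(1)] sep[OF that] by metis
  qed blast
  then show "card (b ` ?C) = card ?C" by (rule card_image)
  have "card (b ` ?C \<inter> T) \<le> h U R T" if T: "T \<in> Reg U R" for T
  proof -
    define D where "D = {B \<in> ?C. b B \<in> T}"
    have D: "D \<subseteq> ?C" "finite D" using C(2) unfolding D_def by auto
    have inj: "inj_on (\<lambda>B. T \<inter> B) D"
    proof (rule chain_inj_onI[OF chain_sub])
      show "T \<inter> B1 \<noteq> T \<inter> B2" if "B1 \<in> D" "B2 \<in> D" "B1 \<subset> B2" for B1 B2
        using that rep sep unfolding D_def by blast
    qed (use D in blast)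
    have notin: "{} \<notin> (\<lambda>B. T \<inter> B) ` D" using rep unfolding D_def by blast
    let ?G = "insert {} ((\<lambda>B. T \<inter> B) ` D)"
    have "?G \<subseteq> {B \<in> Reg U R. B \<subseteq> T}"
      using reg_empty[OF assms(3)] reg_Int[OF assms(1-4) T] C(1) D(1) by blast
    moreover have "chain\<^sub>\<subseteq> ?G" using chain_sub[of D] D(1) unfolding chain_subset_def by blast
    ultimately have "card ?G - 1 \<le> h U R T" using D(2) by (intro h_ge[OF assms(1)]) auto
    then have "card D \<le> h U R T" using notin D(2) inj by (simp add: card_image)
    moreover have "b ` ?C \<inter> T = b ` D" unfolding D_def by blast
    ultimately show ?thesis using card_image_le[OF D(2), of b] by simp
  qed
  moreover have "b ` ?C \<subseteq> U" using rep C(1) reg_subset by blast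
  ultimately show "indep U R (b ` ?C)" unfolding indep_def by blast
qed

lemma rank_ge_transversal:
  assumes "finite U" "R \<subseteq> U \<times> U" "serial U R" "trans R"
    and "C \<subseteq> Reg U R" "finite C" "chain\<^sub>\<subseteq> C" "transversal C b" "b ` (C - {{}}) \<subseteq> W"
  shows "card (C - {{}}) \<le> rank U R W"
  using rank_ge[OF assms(1,9) transversal_indep(1)[OF assms(1-8)]]
    transversal_indep(2)[OF assms(1-8)] by simp

section \<open>Closure\<close>

text \<open>If the representatives of a chain lie in W and realise its rank, then the closure
  of W stays inside the union of the chain: any other point could be represented by a
  new top element U, producing a larger independent set.\<close>
lemma cl_subset_chain_Union:
  assumes "finite U" "R \<subseteq> U \<times> U" "serial U R" "trans R"
    and C: "C \<subseteq> Reg U R" "finite C" "chain\<^sub>\<subseteq> C" and b: "transversal C b"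
    and W: "b ` (C - {{}}) \<subseteq> W" "rank U R W \<le> card (C - {{}})"
  shows "cl U R W \<subseteq> \<Union>C"
proof
  fix u assume u: "u \<in> cl U R W"
  then have uU: "u \<in> U" and rank_eq: "rank U R (W \<union> {u}) = rank U R W" unfolding cl_def by auto
  show "u \<in> \<Union>C"
  proof (rule ccontr)
    assume uC: "u \<notin> \<Union>C"
    have top: "\<forall>B\<in>C. B \<subset> U" using C(1) reg_subset uU uC by blast
    have UC: "U \<notin> C" "U \<noteq> {}" using top uU by auto
    let ?C' = "insert U C" and ?b' = "b(U := u)"
    have "card (?C' - {{}}) \<le> rank U R (W \<union> {u})"
    proof (rule rank_ge_transversal[OF assms(1-4)])
      show "?C' \<subseteq> Reg U R" using C(1) reg_carrier[OF assms(3)] by simp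
      show "chain\<^sub>\<subseteq> ?C'" using chain_insert_top[OF C(3) top] .
      show "transversal ?C' ?b'" using transversal_insert_top[OF b top uU uC] .
      show "?b' ` (?C' - {{}}) \<subseteq> W \<union> {u}"
        unfolding insert_top_image[OF UC(2,1)] using W(1) by blast
    qed (use C(2) in simp)
    moreover have "card (?C' - {{}}) = card (C - {{}}) + 1"
      using UC C(2) by (simp add: insert_Diff_if)
    ultimately show False using rank_eq W(2) by simp
  qed
qed

lemma reg_subset_cl:
  assumes "finite U" "X \<in> Reg U R" "W \<subseteq> X" "h U R X \<le> rank U R W"
  shows "X \<subseteq> cl U R W"
proof
  fix u assume u: "u \<in> X"
  have "rank U R (W \<union> {u}) \<le> rank U R W"
    using rank_le_h[OF assms(1,2), of "W \<union> {u}"] assms(3,4) u by simp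
  moreover have "rank U R W \<le> rank U R (W \<union> {u})" by (rule rank_mono[OF assms(1)]) auto
  ultimately show "u \<in> cl U R W" using u reg_subset[OF assms(2)] unfolding cl_def by auto
qed

theorem proposition9:
  fixes U :: "'a set" and R :: "('a \<times> 'a) set" and n :: nat
  assumes "finite U" and "U \<noteq> {}" and "R \<subseteq> U \<times> U"
    and "serial U R" and "trans R"
    and "1 \<le> n" and "n \<le> h U R U"
    and "X \<in> Reg U R" and "Y \<in> Reg U R"
    and "h U R X = n" and "h U R Y = n - 1"
    and "Z \<subseteq> U" and "Y \<subset> Z" and "Z \<subset> X"
  shows "cl U R Z = X"
proof -
  note UR = assms(1,3,4,5)
  obtain C0 where C0: "finite C0" "C0 \<noteq> {}" "C0 \<subseteq> {B \<in> Reg U R. B \<subseteq> Y}" "chain\<^sub>\<subseteq> C0"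
      "card C0 - 1 = n - 1"
    using h_attained[OF assms(1,4), of Y] assms(11) by auto
  obtain b0 where b0: "transversal C0 b0" using transversal_exists[OF C0(1,4)] by blast
  obtain z where z: "z \<in> Z" "z \<notin> Y" using assms(13) by blast
  have ZX: "Z \<subseteq> X" using assms(14) by blast
  have top: "\<forall>B\<in>C0. B \<subset> X" using C0(3) assms(13,14) by blast
  have XC0: "X \<notin> C0" using top by blast
  have X_ne: "X \<noteq> {}" using z ZX by blast
  have zC0: "z \<notin> \<Union>C0" using C0(3) z by blast
  define C where "C = insert X C0"
  define b where "b = b0(X := z)"
  have "C \<subseteq> Reg U R" unfolding C_def using C0(3) assms(8) by blast
  moreover have "finite C" unfolding C_def using C0(1) by simp
  moreover have "chain\<^sub>\<subseteq> C" unfolding C_def by (rule chain_insert_top[OF C0(4) top])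
  moreover have "transversal C b"
    unfolding C_def b_def using transversal_insert_top[OF b0 top _ zC0] z ZX by blast
  ultimately have C: "C \<subseteq> Reg U R" "finite C" "chain\<^sub>\<subseteq> C" "transversal C b" by blast+
  have "b0 ` (C0 - {{}}) \<subseteq> Y" using b0 C0(3) unfolding transversal_def by blast
  then have reps: "b ` (C - {{}}) \<subseteq> Z"
    unfolding C_def b_def insert_top_image[OF X_ne XC0] using z assms(13) by blast
  have "card (C - {{}}) = card (C0 - {{}}) + 1"
    unfolding C_def using XC0 X_ne C0(1) by (simp add: insert_Diff_if)
  moreover have "card C0 - 1 \<le> card (C0 - {{}})" using diff_card_le_card_Diff[of "{{}}" C0] by simp
  ultimately have long_chain: "n \<le> card (C - {{}})" using C0(5) assms(6) by linarith
  have "n \<le> rank U R Z" using rank_ge_transversal[OF UR C reps] long_chain by linarith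
  moreover have "rank U R Z \<le> n" using rank_le_h[OF assms(1,8) ZX] assms(10) by simp
  ultimately have rank_Z: "rank U R Z = n" by simp
  have "\<Union>C = X" using top unfolding C_def by blast
  then have "cl U R Z \<subseteq> X" using cl_subset_chain_Union[OF UR C reps] rank_Z long_chain by simp
  moreover have "X \<subseteq> cl U R Z" using reg_subset_cl[OF assms(1,8) ZX] assms(10) rank_Z by simp
  ultimately show ?thesis by blast
qed

end
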